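(* Let $n\geq 10$ and $t\geq 3\log_2 n$ be positive integers. Then there exists an orientation $D$ of the complete bipartite graph $K_{n,n}$, with parts $X$ and $Y$, such that for every $I\subseteq X$ and $J\subseteq Y$ with $|I|=|J|=t$, the induced subdigraph $D[I\cup J]$ contains a directed cycle.
   Context: An orientation of a graph is the digraph obtained by giving each edge one of its two directions. *)

theory Defs
  imports Complex_Main
begin

text \<open>Complete bipartite graph K_{n,n}: vertices Inl i (i < n, part X) and Inr j (j < n, part Y).
 An orientation is encoded by d :: nat => nat => bool: d i j means the edge x_i y_j is
 oriented x_i -> y_j, otherwise y_j -> x_i. Every orientation arises this way.\<close>

fun orient_arc :: "(nat \<Rightarrow> nat \<Rightarrow> bool) \<Rightarrow> nat + nat \<Rightarrow> nat + nat \<Rightarrow> bool" where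
  "orient_arc d (Inl i) (Inr j) = d i j"
| "orient_arc d (Inr j) (Inl i) = (\<not> d i j)"
| "orient_arc d _ _ = False"

definition has_dcycle :: "('v \<Rightarrow> 'v \<Rightarrow> bool) \<Rightarrow> 'v set \<Rightarrow> bool" where
  "has_dcycle A V \<longleftrightarrow> (\<exists>vs. 2 \<le> length vs \<and> distinct vs \<and> set vs \<subseteq> V \<and>
      (\<forall>k < length vs. A (vs ! k) (vs ! ((k + 1) mod length vs))))"

end

theory Submission
  imports Defs "HOL-Library.FuncSet"
begin

text \<open>Count arc sets: \<open>E\<close> determines the orientation with arcs \<open>x\<^sub>i \<rightarrow> y\<^sub>j\<close> for \<open>(i, j) \<in> E\<close>.
  If this orientation has no directed cycle on \<open>I \<union> J\<close>, it has no directed 4-cycle there, so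
  \<open>E \<inter> I \<times> J\<close> is a Ferrers relation (the neighbourhoods of the vertices of \<open>J\<close> form a chain),
  and a Ferrers relation is determined by its row and column degrees. Hence at most
  (t+1)^(2t) 2^(n^2 - t^2) arc sets are acyclic on a given \<open>I \<union> J\<close>, and summing over the
  (n choose t)^2 pairs \<open>(I, J)\<close> gives fewer than 2^(n^2) arc sets, because
  (n choose t) (t+1)^t \<le> (3n)^t and 9 n^2 < n^3 \<le> 2^t.\<close>

lemma has_dcycle_4:
  assumes "A a b" "A b c" "A c d" "A d a" "distinct [a, b, c, d]" "{a, b, c, d} \<subseteq> V"
  shows "has_dcycle A V"
  unfolding has_dcycle_def
proof (intro exI[of _ "[a, b, c, d]"] conjI allI impI)
  fix k assume "k < length [a, b, c, d]"
  then consider "k = 0" | "k = 1" | "k = 2" | "k = 3" by fastforce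
  then show "A ([a, b, c, d] ! k) ([a, b, c, d] ! ((k + 1) mod length [a, b, c, d]))"
    by cases (use assms in simp_all)
qed (use assms in simp_all)

definition ferrers_on :: "('a \<times> 'b) set \<Rightarrow> 'a set \<Rightarrow> 'b set \<Rightarrow> bool" where
  "ferrers_on E I J \<longleftrightarrow>
     (\<forall>i\<in>I. \<forall>i'\<in>I. \<forall>j\<in>J. \<forall>j'\<in>J. (i, j) \<in> E \<longrightarrow> (i', j') \<in> E \<longrightarrow> (i, j') \<in> E \<or> (i', j) \<in> E)"

lemma ferrers_on_if_not_has_dcycle:
  assumes "\<not> has_dcycle (orient_arc (\<lambda>i j. (i, j) \<in> E)) (Inl ` I \<union> Inr ` J)"
  shows "ferrers_on E I J"
  unfolding ferrers_on_def
proof (intro ballI impI)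
  fix i i' j j'
  assume ij: "i \<in> I" "i' \<in> I" "j \<in> J" "j' \<in> J" "(i, j) \<in> E" "(i', j') \<in> E"
  show "(i, j') \<in> E \<or> (i', j) \<in> E"
  proof (rule ccontr)
    assume "\<not> ((i, j') \<in> E \<or> (i', j) \<in> E)"
    with ij have "has_dcycle (orient_arc (\<lambda>i j. (i, j) \<in> E)) (Inl ` I \<union> Inr ` J)"
      by (intro has_dcycle_4[of _ "Inl i" "Inr j" "Inl i'" "Inr j'"]) auto
    with assms show False ..
  qed
qed

definition row_deg :: "('a \<times> 'b) set \<Rightarrow> 'b set \<Rightarrow> 'a \<Rightarrow> nat" where
  "row_deg E J i = card {j \<in> J. (i, j) \<in> E}"

definition col_deg :: "('a \<times> 'b) set \<Rightarrow> 'a set \<Rightarrow> 'b \<Rightarrow> nat" where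
  "col_deg E I j = card {i \<in> I. (i, j) \<in> E}"

lemma ferrers_on_col_deg_less:
  assumes "finite I" "ferrers_on E I J" "i \<in> I" "j \<in> J" "j' \<in> J" "(i, j) \<in> E" "(i, j') \<notin> E"
  shows "col_deg E I j' < col_deg E I j"
proof -
  have "{i' \<in> I. (i', j') \<in> E} \<subset> {i' \<in> I. (i', j) \<in> E}"
    using assms unfolding ferrers_on_def by blast
  with \<open>finite I\<close> show ?thesis
    unfolding col_deg_def by (intro psubset_card_mono) auto
qed

lemma ferrers_on_mem_iff:
  assumes "finite I" "finite J" "ferrers_on E I J" "i \<in> I" "j \<in> J"
  shows "(i, j) \<in> E \<longleftrightarrow> card {j' \<in> J. col_deg E I j \<le> col_deg E I j'} \<le> row_deg E J i"
proof
  assume "(i, j) \<in> E"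
  then have "{j' \<in> J. col_deg E I j \<le> col_deg E I j'} \<subseteq> {j' \<in> J. (i, j') \<in> E}"
    using ferrers_on_col_deg_less[OF assms(1,3,4,5)] by (auto simp: not_less[symmetric])
  with \<open>finite J\<close> show "card {j' \<in> J. col_deg E I j \<le> col_deg E I j'} \<le> row_deg E J i"
    unfolding row_deg_def by (intro card_mono) auto
next
  assume le: "card {j' \<in> J. col_deg E I j \<le> col_deg E I j'} \<le> row_deg E J i"
  show "(i, j) \<in> E"
  proof (rule ccontr)
    assume "(i, j) \<notin> E"
    then have "{j' \<in> J. (i, j') \<in> E} \<subseteq> {j' \<in> J. col_deg E I j < col_deg E I j'}"
      using ferrers_on_col_deg_less[OF assms(1,3,4) _ assms(5)] by auto
    then have "row_deg E J i \<le> card {j' \<in> J. col_deg E I j < col_deg E I j'}"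
      unfolding row_deg_def using \<open>finite J\<close> by (intro card_mono) auto
    also have "\<dots> < card {j' \<in> J. col_deg E I j \<le> col_deg E I j'}"
      using \<open>finite J\<close> \<open>j \<in> J\<close> by (intro psubset_card_mono) auto
    finally show False using le by simp
  qed
qed

lemma ferrers_on_eq_if_degrees_eq:
  assumes "finite I" "finite J" "ferrers_on E I J" "ferrers_on E' I J"
    and "\<And>i. i \<in> I \<Longrightarrow> row_deg E J i = row_deg E' J i"
    and "\<And>j. j \<in> J \<Longrightarrow> col_deg E I j = col_deg E' I j"
  shows "E \<inter> I \<times> J = E' \<inter> I \<times> J"
proof (intro set_eqI iffI)
  have same: "(i, j) \<in> E \<longleftrightarrow> (i, j) \<in> E'" if "i \<in> I" "j \<in> J" for i j
  proof -
    have "{j' \<in> J. col_deg E I j \<le> col_deg E I j'} = {j' \<in> J. col_deg E' I j \<le> col_deg E' I j'}"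
      using assms(6) \<open>j \<in> J\<close> by auto
    then show ?thesis
      using ferrers_on_mem_iff[OF assms(1-3) that] ferrers_on_mem_iff[OF assms(1,2,4) that]
        assms(5)[OF \<open>i \<in> I\<close>] by simp
  qed
  show "x \<in> E' \<inter> I \<times> J" if "x \<in> E \<inter> I \<times> J" for x using that same by auto
  show "x \<in> E \<inter> I \<times> J" if "x \<in> E' \<inter> I \<times> J" for x using that same by auto
qed

lemma card_ferrers_on_le:
  assumes "finite A" "I \<times> J \<subseteq> A" "finite I" "finite J"
  shows "card {E \<in> Pow A. ferrers_on E I J}
           \<le> (card J + 1) ^ card I * (card I + 1) ^ card J * 2 ^ (card A - card I * card J)"
proof -
  define F where "F = {E \<in> Pow A. ferrers_on E I J}"
  define code where
    "code E = (restrict (row_deg E J) I, restrict (col_deg E I) J, E - I \<times> J)" for E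
  have inj: "inj_on code F"
  proof (rule inj_onI)
    fix E E' assume "E \<in> F" "E' \<in> F" and eq: "code E = code E'"
    have rows: "restrict (row_deg E J) I = restrict (row_deg E' J) I"
      and cols: "restrict (col_deg E I) J = restrict (col_deg E' I) J"
      using eq unfolding code_def by simp_all
    have "row_deg E J i = row_deg E' J i" if "i \<in> I" for i
      using fun_cong[OF rows, of i] that by simp
    moreover have "col_deg E I j = col_deg E' I j" if "j \<in> J" for j
      using fun_cong[OF cols, of j] that by simp
    ultimately have "E \<inter> I \<times> J = E' \<inter> I \<times> J"
      using assms(3,4) \<open>E \<in> F\<close> \<open>E' \<in> F\<close> unfolding F_def
      by (intro ferrers_on_eq_if_degrees_eq) auto
    moreover have "E - I \<times> J = E' - I \<times> J" using eq unfolding code_def by simp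
    ultimately show "E = E'" by blast
  qed
  have deg: "row_deg E J i \<le> card J" "col_deg E I j \<le> card I" for E i j
    unfolding row_deg_def col_deg_def using assms(3,4) by (auto intro: card_mono)
  have img: "code ` F \<subseteq> (I \<rightarrow>\<^sub>E {..card J}) \<times> (J \<rightarrow>\<^sub>E {..card I}) \<times> Pow (A - I \<times> J)"
    unfolding F_def code_def using deg by auto
  have "card F \<le> card ((I \<rightarrow>\<^sub>E {..card J}) \<times> (J \<rightarrow>\<^sub>E {..card I}) \<times> Pow (A - I \<times> J))"
    using assms by (intro card_inj_on_le[OF inj img]) (auto intro: finite_PiE)
  also have "\<dots> = (card J + 1) ^ card I * (card I + 1) ^ card J * 2 ^ card (A - I \<times> J)"
    using assms by (simp add: card_PiE card_cartesian_product card_Pow)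
  also have "card (A - I \<times> J) = card A - card I * card J"
    using assms by (simp add: card_Diff_subset finite_cartesian_product card_cartesian_product)
  finally show ?thesis unfolding F_def .
qed

lemma card_ferrers_on_square_le:
  assumes "I \<subseteq> {..<n}" "J \<subseteq> {..<n}" "card I = t" "card J = t"
  shows "card {E \<in> Pow ({..<n} \<times> {..<n}). ferrers_on E I J}
           \<le> (t + 1) ^ t * (t + 1) ^ t * 2 ^ (n * n - t * t)"
proof -
  have "finite I" "finite J" using assms(1,2) by (auto intro: finite_subset)
  moreover have "I \<times> J \<subseteq> {..<n} \<times> {..<n}" using assms(1,2) by auto
  ultimately show ?thesis
    using assms(3,4) card_ferrers_on_le[of "{..<n} \<times> {..<n}" I J]
    by (simp add: card_cartesian_product)
qed

lemma ex_notin_UN_if_sum_card_less: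
  assumes "finite S" "finite K" "\<And>k. k \<in> K \<Longrightarrow> B k \<subseteq> S" "(\<Sum>k\<in>K. card (B k)) < card S"
  shows "\<exists>x\<in>S. \<forall>k\<in>K. x \<notin> B k"
proof (rule ccontr)
  assume "\<not> ?thesis"
  then have "S \<subseteq> (\<Union>k\<in>K. B k)" by blast
  then have "card S \<le> card (\<Union>k\<in>K. B k)"
    using assms(1,2,3) by (intro card_mono) (auto intro: finite_subset)
  also have "\<dots> \<le> (\<Sum>k\<in>K. card (B k))"
    using assms(2) by (rule card_UN_le)
  finally show False using assms(4) by simp
qed

lemma power_succ_le_three_mul: "(real m + 2) ^ (m + 1) \<le> 3 * (real m + 1) ^ (m + 1)"
proof -
  have "(1 + 1 / real (m + 1)) ^ (m + 1) \<le> exp 1"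
    by (rule exp_ge_one_plus_x_over_n_power_n) auto
  also have "\<dots> \<le> 3" by (rule exp_le)
  finally have "(1 + 1 / real (m + 1)) ^ (m + 1) \<le> 3" .
  moreover have "real m + 2 = (real m + 1) * (1 + 1 / real (m + 1))"
    by (simp add: field_simps)
  ultimately show ?thesis
    by (simp add: power_mult_distrib mult_left_mono mult.commute)
qed

lemma succ_power_le_three_power_fact: "(real t + 1) ^ t \<le> 3 ^ t * fact t"
proof (induction t)
  case (Suc m)
  have "(real (Suc m) + 1) ^ Suc m = (real m + 2) ^ (m + 1)" by (simp add: add.commute)
  also have "\<dots> \<le> 3 * (real m + 1) ^ (m + 1)" by (rule power_succ_le_three_mul)
  also have "\<dots> = 3 * (real m + 1) * (real m + 1) ^ m" by simp
  also have "\<dots> \<le> 3 * (real m + 1) * (3 ^ m * fact m)"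
    using Suc.IH by (intro mult_left_mono) auto
  also have "\<dots> = 3 ^ Suc m * fact (Suc m)" by (simp add: algebra_simps)
  finally show ?case .
qed simp

lemma binomial_mul_succ_power_le: "real (n choose t) * (real t + 1) ^ t \<le> (3 * real n) ^ t"
proof -
  have "real (n choose t) * (real t + 1) ^ t \<le> 3 ^ t * (real (n choose t) * fact t)"
    using succ_power_le_three_power_fact[of t] by (simp add: mult_left_mono mult.left_commute)
  also have "real (n choose t) * fact t \<le> real n ^ t"
    using binomial_fact_pow[of n t] by (metis of_nat_fact of_nat_le_iff of_nat_mult of_nat_power)
  finally show ?thesis by (simp add: power_mult_distrib)
qed

lemma cube_le_two_power:
  assumes "n > 0" "3 * log 2 (real n) \<le> real t"
  shows "real n ^ 3 \<le> 2 ^ t"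
proof -
  have "2 powr (3 * log 2 (real n)) = (2 powr log 2 (real n)) powr 3"
    by (simp add: powr_powr mult.commute)
  also have "\<dots> = real n ^ 3" using assms(1) by (simp add: powr_realpow)
  finally have "real n ^ 3 = 2 powr (3 * log 2 (real n))" by simp
  also have "\<dots> \<le> 2 powr real t" using assms(2) by (intro powr_mono) auto
  finally show ?thesis by (simp add: powr_realpow)
qed

lemma binomial_sq_mul_succ_power_sq_less:
  assumes "n \<ge> 10" "t > 0" "3 * log 2 (real n) \<le> real t"
  shows "(n choose t) ^ 2 * ((t + 1) ^ t) ^ 2 * 2 ^ (n * n - t * t) < (2::nat) ^ (n * n)"
proof (cases "t \<le> n")
  case True
  have "(3 * real n) ^ 2 < real n ^ 3"
    using assms(1) by (simp add: power2_eq_square power3_eq_cube)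
  also have "\<dots> \<le> 2 ^ t" using assms by (intro cube_le_two_power) auto
  finally have "(3 * real n) ^ 2 < 2 ^ t" .
  have "(real (n choose t) * (real t + 1) ^ t) ^ 2 \<le> ((3 * real n) ^ 2) ^ t"
    using binomial_mul_succ_power_le[of n t]
    by (metis power_mono power_mult mult.commute zero_le_mult_iff of_nat_0_le_iff
        zero_le_power add_nonneg_nonneg zero_le_one)
  also have "\<dots> < (2 ^ t) ^ t"
    using \<open>(3 * real n) ^ 2 < 2 ^ t\<close> assms(2) by (intro power_strict_mono) auto
  finally have "(real (n choose t) * (real t + 1) ^ t) ^ 2 * 2 ^ (n * n - t * t)
      < 2 ^ (t * t) * 2 ^ (n * n - t * t)"
    by (simp add: power_mult)
  also have "\<dots> = 2 ^ (n * n)"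
    using True by (simp add: power_add[symmetric] mult_le_mono)
  finally have "real ((n choose t) ^ 2 * ((t + 1) ^ t) ^ 2 * 2 ^ (n * n - t * t))
      < real ((2::nat) ^ (n * n))"
    by (simp add: power_mult_distrib add.commute)
  then show ?thesis by (simp only: of_nat_less_iff)
qed (simp add: binomial_eq_0)

theorem mainTheorem5:
  fixes n t :: nat
  assumes "n \<ge> 10" and "t > 0" and "real t \<ge> 3 * log 2 (real n)"
  shows "\<exists>d :: nat \<Rightarrow> nat \<Rightarrow> bool. \<forall>I J. I \<subseteq> {..<n} \<and> J \<subseteq> {..<n} \<and> card I = t \<and> card J = t \<longrightarrow>
           has_dcycle (orient_arc d) (Inl ` I \<union> Inr ` J)"
proof -
  define T where "T = {I. I \<subseteq> {..<n} \<and> card I = t}"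
  define A where "A = {..<n} \<times> {..<n}"
  define Bad where "Bad = (\<lambda>(I, J). {E \<in> Pow A. ferrers_on E I J})"
  have "finite T" unfolding T_def by (rule finite_subset[of _ "Pow {..<n}"]) auto
  have "card (Bad p) \<le> (t + 1) ^ t * (t + 1) ^ t * 2 ^ (n * n - t * t)" if "p \<in> T \<times> T" for p
    using that card_ferrers_on_square_le[of _ n] unfolding T_def Bad_def A_def by auto
  then have "(\<Sum>p\<in>T \<times> T. card (Bad p)) \<le> (\<Sum>p\<in>T \<times> T. (t + 1) ^ t * (t + 1) ^ t * 2 ^ (n * n - t * t))"
    by (rule sum_mono)
  also have "\<dots> = (n choose t) ^ 2 * ((t + 1) ^ t) ^ 2 * 2 ^ (n * n - t * t)"
    using n_subsets[of "{..<n}" t] by (simp add: T_def card_cartesian_product power2_eq_square)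
  also have "\<dots> < card (Pow A)"
    using binomial_sq_mul_succ_power_sq_less[OF assms(1,2)] assms(3) by (simp add: A_def card_Pow)
  finally obtain E where "E \<in> Pow A" and E: "\<forall>p\<in>T \<times> T. E \<notin> Bad p"
    using ex_notin_UN_if_sum_card_less[of "Pow A" "T \<times> T" Bad] \<open>finite T\<close>
    by (auto simp: A_def Bad_def)
  show ?thesis
  proof (intro exI[of _ "\<lambda>i j. (i, j) \<in> E"] allI impI)
    fix I J assume "I \<subseteq> {..<n} \<and> J \<subseteq> {..<n} \<and> card I = t \<and> card J = t"
    then have "\<not> ferrers_on E I J" using E \<open>E \<in> Pow A\<close> by (auto simp: T_def Bad_def)
    then show "has_dcycle (orient_arc (\<lambda>i j. (i, j) \<in> E)) (Inl ` I \<union> Inr ` J)"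
      using ferrers_on_if_not_has_dcycle by blast
  qed
qed

end
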